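(* Consider the additive noise SCM with two treatments \[ X_1 = U_1,\qquad X_2 = f_2(X_1)+U_2,\qquad Y = f_Y(X_1,X_2)+U_Y, \] where $f_2:\mathbb R\to\mathbb R$, $f_Y:\mathbb R^2\to\mathbb R$ are continuous and $(U_1,U_2,U_Y)\sim\mathcal N(\mathbf 0,\Sigma)$ with $\Sigma$ positive definite. For $x_1,x_2\in\mathbb R$ let $g(x_1,x_2):=\mathbb E[Y\mid X_1=x_1, do(X_2=x_2)]$ denote the conditional expectation of $Y$ given $X_1=x_1$ in the model intervened by $do(X_2=x_2)$. Then for every $x_1\in\mathbb R$, \[ \mathbb E_{u_2\sim p(U_2)}\big[g(x_1, f_2(x_1)+u_2)\big] - \mathbb E[Y\mid do(X_1=x_1)] = \mathbb E[U_Y\mid U_1=x_1] = \frac{\sigma_{Y1}}{\sigma_{11}}\,x_1, \] where $p(U_2)$ is the marginal distribution of $U_2$, $\sigma_{Y1}=\mathrm{Cov}(U_Y,U_1)$ and $\sigma_{11}=\mathrm{Var}(U_1)$. Moreover $f_2(x_1)=\mathbb E[X_2\mid do(X_1=x_1)]$, so that every quantity on the left-hand side is determined by the observational distribution and the single-variable interventional distributions under $do(X_1=\cdot)$ and $do(X_2=\cdot)$.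
   Context: A perfect intervention $do(X_i=x)$ replaces the structural equation of $X_i$ by the constant $x$ and leaves all other equations and the noise distribution unchanged; $\mathbb E[\cdot\mid do(\cdot)]$ denotes expectation in the intervened model. The noise variables may be correlated (hidden confounding). *)

theory Defs
  imports "HOL-Analysis.Analysis"
begin

text \<open>Noise vector (U1, U2, UY) is represented as a triple (u1, u2, uy) :: real \<times> real \<times> real.
  The covariance matrix Sigma is a 3x3 real matrix indexed by 1 (U1), 2 (U2), 3 (UY),
  matching the components of vector [u1, u2, uy].\<close>

definition pos_definite :: "real^3^3 \<Rightarrow> bool" where
  "pos_definite S \<longleftrightarrow> transpose S = S \<and> (\<forall>x::real^3. x \<noteq> 0 \<longrightarrow> 0 < x \<bullet> (S *v x))"

definition gauss_dens :: "real^3^3 \<Rightarrow> real \<times> real \<times> real \<Rightarrow> real" where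
  "gauss_dens S u = (case u of (a, b, c) \<Rightarrow>
     (let v = (vector [a, b, c] :: real^3)
      in exp (- (v \<bullet> (matrix_inv S *v v)) / 2) / sqrt ((2 * pi) ^ 3 * det S)))"

definition noise :: "real^3^3 \<Rightarrow> (real \<times> real \<times> real) measure" where
  "noise S = density lborel (\<lambda>u. ennreal (gauss_dens S u))"

definition cond_exp_U1 :: "real^3^3 \<Rightarrow> (real \<times> real \<times> real \<Rightarrow> real) \<Rightarrow> real \<Rightarrow> real" where
  "cond_exp_U1 S h x1 =
     (\<integral>w. h (x1, w) * gauss_dens S (x1, w) \<partial>(lborel :: (real \<times> real) measure)) /
     (\<integral>w. gauss_dens S (x1, w) \<partial>(lborel :: (real \<times> real) measure))"

definition X2_do1 :: "(real \<Rightarrow> real) \<Rightarrow> real \<Rightarrow> real \<times> real \<times> real \<Rightarrow> real" where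
  "X2_do1 f2 x1 u = (case u of (u1, u2, uy) \<Rightarrow> f2 x1 + u2)"

definition Y_do1 :: "(real \<Rightarrow> real) \<Rightarrow> (real \<times> real \<Rightarrow> real) \<Rightarrow> real \<Rightarrow> real \<times> real \<times> real \<Rightarrow> real" where
  "Y_do1 f2 fY x1 u = (case u of (u1, u2, uy) \<Rightarrow> fY (x1, X2_do1 f2 x1 u) + uy)"

definition X1_do2 :: "real \<times> real \<times> real \<Rightarrow> real" where
  "X1_do2 u = (case u of (u1, u2, uy) \<Rightarrow> u1)"

definition Y_do2 :: "(real \<times> real \<Rightarrow> real) \<Rightarrow> real \<Rightarrow> real \<times> real \<times> real \<Rightarrow> real" where
  "Y_do2 fY x2 u = (case u of (u1, u2, uy) \<Rightarrow> fY (X1_do2 u, x2) + uy)"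

text \<open>g(x1, x2) = E[Y | X1 = x1, do(X2 = x2)]; since X1 = U1 in that model, conditioning
  on X1 = x1 is conditioning on U1 = x1.\<close>
definition g_cond :: "real^3^3 \<Rightarrow> (real \<times> real \<Rightarrow> real) \<Rightarrow> real \<Rightarrow> real \<Rightarrow> real" where
  "g_cond S fY x1 x2 = cond_exp_U1 S (Y_do2 fY x2) x1"

end

theory Submission
  imports Defs "HOL-Probability.Probability"
begin

text \<open>Inverting \<open>\<Sigma>\<close> and completing the square writes the \<open>N(0, \<Sigma>)\<close> density as a chain of
  one-dimensional normal densities: \<open>U\<^sub>1 \<sim> N(0, \<sigma>\<^sub>1\<^sup>2)\<close>, \<open>U\<^sub>2 | U\<^sub>1 \<sim> N(k U\<^sub>1, \<sigma>\<^sub>2\<^sup>2)\<close> and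
  \<open>U\<^sub>Y | U\<^sub>1, U\<^sub>2 \<sim> N(l\<^sub>1 U\<^sub>1 + l\<^sub>2 U\<^sub>2, \<sigma>\<^sub>3\<^sup>2)\<close>, where \<open>l\<^sub>1 + l\<^sub>2 k = \<sigma>\<^sub>Y\<^sub>1 / \<sigma>\<^sub>1\<^sub>1\<close>.
  Integrating affine functions against such a chain layer by layer (Fubini) shows that the noise
  is centred and that \<open>E[U\<^sub>Y | U\<^sub>1 = x\<^sub>1] = (l\<^sub>1 + l\<^sub>2 k) x\<^sub>1\<close>. Hence
  \<open>g(x\<^sub>1, x\<^sub>2) = f\<^sub>Y(x\<^sub>1, x\<^sub>2) + \<sigma>\<^sub>Y\<^sub>1 / \<sigma>\<^sub>1\<^sub>1 x\<^sub>1\<close>, whereas the mean-zero \<open>U\<^sub>Y\<close> drops out of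
  \<open>E[Y | do(X\<^sub>1 = x\<^sub>1)] = E[f\<^sub>Y(x\<^sub>1, f\<^sub>2 x\<^sub>1 + U\<^sub>2)]\<close>; the difference is the confounding bias.\<close>

section \<open>Positive definite \<open>3 \<times> 3\<close> matrices\<close>

lemma inner_matrix_vector_3:
  "(vector [a, b, c] :: real^3) \<bullet> ((P::real^3^3) *v vector [a, b, c]) =
     a * (P$1$1 * a + P$1$2 * b + P$1$3 * c) + b * (P$2$1 * a + P$2$2 * b + P$2$3 * c)
       + c * (P$3$1 * a + P$3$2 * b + P$3$3 * c)"
  by (simp add: inner_vec_def matrix_vector_mult_def sum_3 algebra_simps)

lemma vector_3_eq_0_iff: "((vector [a, b, c] :: real^3) = 0) \<longleftrightarrow> a = 0 \<and> b = 0 \<and> c = 0"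
  by (auto simp: vec_eq_iff forall_3 vector_3)

lemma pos_definite_matrix_inv:
  assumes "pos_definite S"
  shows "S ** matrix_inv S = mat 1" and "matrix_inv S ** S = mat 1"
    and "pos_definite (matrix_inv S)"
proof -
  have sym: "transpose S = S" and pos: "\<And>x. x \<noteq> 0 \<Longrightarrow> 0 < x \<bullet> (S *v x)"
    using assms unfolding pos_definite_def by auto
  have "x = 0" if "S *v x = 0" for x
    using pos[of x] that by fastforce
  then have "invertible S"
    using invertible_left_inverse matrix_left_invertible_ker by blast
  then have "S ** matrix_inv S = mat 1 \<and> matrix_inv S ** S = mat 1"
    unfolding matrix_inv_def invertible_def by (rule someI_ex)
  then show SP: "S ** matrix_inv S = mat 1" and "matrix_inv S ** S = mat 1" by auto
  let ?P = "matrix_inv S"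
  have "transpose ?P ** S = mat 1"
    by (metis SP matrix_transpose_mul sym transpose_mat)
  then have "transpose ?P = ?P"
    by (metis SP matrix_mul_assoc matrix_mul_lid matrix_mul_rid)
  moreover have "0 < x \<bullet> (?P *v x)" if "x \<noteq> 0" for x
  proof -
    have Sy: "S *v (?P *v x) = x" by (simp add: SP matrix_vector_mul_assoc)
    then have "0 < (?P *v x) \<bullet> (S *v (?P *v x))"
      using that by (intro pos) auto
    then show ?thesis by (simp add: Sy inner_commute)
  qed
  ultimately show "pos_definite ?P" unfolding pos_definite_def by blast
qed

lemma pos_definite_symmetric_entries:
  assumes "pos_definite P"
  shows "P$2$1 = P$1$2" and "P$3$1 = P$1$3" and "P$3$2 = P$2$3"
proof -
  have "transpose P $ i $ j = P $ i $ j" for i j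
    using assms unfolding pos_definite_def by simp
  then show "P$2$1 = P$1$2" and "P$3$1 = P$1$3" and "P$3$2 = P$2$3"
    by (simp_all add: transpose_def)
qed

lemma pos_definite_quadratic_form:
  assumes "pos_definite P"
  shows "(vector [a, b, c] :: real^3) \<bullet> (P *v vector [a, b, c]) =
    P$1$1 * a\<^sup>2 + P$2$2 * b\<^sup>2 + P$3$3 * c\<^sup>2 + 2 * P$1$2 * a * b + 2 * P$1$3 * a * c + 2 * P$2$3 * b * c"
  unfolding inner_matrix_vector_3 pos_definite_symmetric_entries[OF assms]
  by (simp add: power2_eq_square algebra_simps)

lemma pos_definite_det:
  assumes "pos_definite P"
  shows "det P = P$1$1 * (P$2$2 * P$3$3 - (P$2$3)\<^sup>2) - P$1$2 * (P$1$2 * P$3$3 - P$1$3 * P$2$3)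
    + P$1$3 * (P$1$2 * P$2$3 - P$1$3 * P$2$2)"
  unfolding det_3 pos_definite_symmetric_entries[OF assms]
  by (simp add: power2_eq_square algebra_simps)

lemma pos_definite_minors:
  assumes "pos_definite P"
  shows "0 < P$1$1" and "0 < P$3$3" and "0 < P$2$2 * P$3$3 - (P$2$3)\<^sup>2" and "0 < det P"
proof -
  txt \<open>The test vectors below are chosen so that the form collapses to products of the
    trailing principal minors.\<close>
  have Q: "0 < P$1$1 * a\<^sup>2 + P$2$2 * b\<^sup>2 + P$3$3 * c\<^sup>2 + 2 * P$1$2 * a * b + 2 * P$1$3 * a * c + 2 * P$2$3 * b * c"
    if "a \<noteq> 0 \<or> b \<noteq> 0 \<or> c \<noteq> 0" for a b c
    using assms that unfolding pos_definite_def pos_definite_quadratic_form[OF assms, symmetric]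
    by (simp add: vector_3_eq_0_iff)
  show "0 < P$1$1" using Q[of 1 0 0] by simp
  show p33: "0 < P$3$3" using Q[of 0 0 1] by simp
  define D where "D = P$2$2 * P$3$3 - (P$2$3)\<^sup>2"
  have "0 < P$3$3 * D"
    using Q[of 0 "P$3$3" "- P$2$3"] p33 by (simp add: D_def power2_eq_square algebra_simps)
  then show D: "0 < D" using p33 by (simp add: zero_less_mult_iff)
  have "0 < D * det P"
    using Q[of D "P$2$3 * P$1$3 - P$1$2 * P$3$3" "P$1$2 * P$2$3 - P$2$2 * P$1$3"] D
    unfolding pos_definite_det[OF assms] by (simp add: D_def power2_eq_square algebra_simps)
  then show "0 < det P" using D by (simp add: zero_less_mult_iff)
qed

lemma complete_square_3:
  fixes p11 p12 p13 p22 p23 p33 :: real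
  assumes "p33 \<noteq> 0" and "D \<noteq> 0" and "D = p22 * p33 - p23\<^sup>2"
    and "\<Delta> = p11 * D - p12 * (p12 * p33 - p13 * p23) + p13 * (p12 * p23 - p13 * p22)"
  shows "p11 * a\<^sup>2 + p22 * b\<^sup>2 + p33 * c\<^sup>2 + 2 * p12 * a * b + 2 * p13 * a * c + 2 * p23 * b * c
    = \<Delta> / D * a\<^sup>2 + D / p33 * (b - (p13 * p23 - p12 * p33) / D * a)\<^sup>2
      + p33 * (c - (- p13 / p33 * a + - p23 / p33 * b))\<^sup>2"
  using assms by (simp add: field_simps power2_eq_square) algebra

section \<open>Mixtures of normal densities with affine means\<close>

lemma integrable_normal_density_abs_moment:
  assumes "0 < \<sigma>"
  shows "integrable lborel (\<lambda>x. normal_density \<mu> \<sigma> x * \<bar>x\<bar>)"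
  using integrable_abs[OF integrable_normal_moment_nz_1[OF assms]] by (simp add: abs_mult)

lemma normal_density_abs_moment_le:
  assumes "0 < \<sigma>"
  shows "(\<integral>x. normal_density \<mu> \<sigma> x * \<bar>x\<bar> \<partial>lborel) \<le> \<bar>\<mu>\<bar> + \<sigma>"
proof -
  have int_abs: "integrable lborel (\<lambda>x. normal_density \<mu> \<sigma> x * \<bar>x - \<mu>\<bar>^1)"
    by (rule integrable_normal_moment_abs[OF assms])
  have "(\<integral>x. normal_density \<mu> \<sigma> x * \<bar>x\<bar> \<partial>lborel)
      \<le> (\<integral>x. \<bar>\<mu>\<bar> * normal_density \<mu> \<sigma> x + normal_density \<mu> \<sigma> x * \<bar>x - \<mu>\<bar>^1 \<partial>lborel)"
  proof (rule integral_mono)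
    show "integrable lborel (\<lambda>x. normal_density \<mu> \<sigma> x * \<bar>x\<bar>)"
      by (rule integrable_normal_density_abs_moment[OF assms])
    show "normal_density \<mu> \<sigma> x * \<bar>x\<bar> \<le> \<bar>\<mu>\<bar> * normal_density \<mu> \<sigma> x + normal_density \<mu> \<sigma> x * \<bar>x - \<mu>\<bar>^1" for x
      using mult_left_mono[of "\<bar>x\<bar>" "\<bar>\<mu>\<bar> + \<bar>x - \<mu>\<bar>" "normal_density \<mu> \<sigma> x"]
      by (simp add: algebra_simps)
  qed (use int_abs assms in auto)
  also have "\<dots> = \<bar>\<mu>\<bar> + \<sigma> * sqrt (2 / pi)"
    using integral_normal_moment_abs_odd[OF assms, of \<mu> 0] int_abs assms by simp
  also have "\<dots> \<le> \<bar>\<mu>\<bar> + \<sigma>"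
    using assms pi_gt3 by (simp add: mult_left_le real_sqrt_le_1_iff)
  finally show ?thesis .
qed

lemma normal_density_affine_moment:
  assumes "0 < \<sigma>"
  shows "integrable lborel (\<lambda>x. normal_density \<mu> \<sigma> x * (a + b * x))"
    and "(\<integral>x. normal_density \<mu> \<sigma> x * (a + b * x) \<partial>lborel) = a + b * \<mu>"
    and "(\<integral>x. \<bar>normal_density \<mu> \<sigma> x * (a + b * x)\<bar> \<partial>lborel) \<le> \<bar>a\<bar> + \<bar>b\<bar> * (\<bar>\<mu>\<bar> + \<sigma>)"
proof -
  have split: "(\<lambda>x. normal_density \<mu> \<sigma> x * (a + b * x))
      = (\<lambda>x. a * normal_density \<mu> \<sigma> x + b * (normal_density \<mu> \<sigma> x * x))"
    by (simp add: fun_eq_iff algebra_simps)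
  have int_id: "integrable lborel (\<lambda>x. normal_density \<mu> \<sigma> x * x)"
    by (rule integrable_normal_moment_nz_1[OF assms])
  then show int: "integrable lborel (\<lambda>x. normal_density \<mu> \<sigma> x * (a + b * x))"
    unfolding split using assms by auto
  show "(\<integral>x. normal_density \<mu> \<sigma> x * (a + b * x) \<partial>lborel) = a + b * \<mu>"
    unfolding split using int_id assms integral_normal_moment_nz_1[OF assms] by simp
  note int_abs_id = integrable_normal_density_abs_moment[OF assms]
  have "(\<integral>x. \<bar>normal_density \<mu> \<sigma> x * (a + b * x)\<bar> \<partial>lborel)
      \<le> (\<integral>x. \<bar>a\<bar> * normal_density \<mu> \<sigma> x + \<bar>b\<bar> * (normal_density \<mu> \<sigma> x * \<bar>x\<bar>) \<partial>lborel)"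
  proof (rule integral_mono)
    fix x
    have "\<bar>normal_density \<mu> \<sigma> x * (a + b * x)\<bar> = normal_density \<mu> \<sigma> x * \<bar>a + b * x\<bar>"
      by (simp add: abs_mult)
    also have "\<dots> \<le> normal_density \<mu> \<sigma> x * (\<bar>a\<bar> + \<bar>b\<bar> * \<bar>x\<bar>)"
      using abs_triangle_ineq[of a "b * x"] by (intro mult_left_mono) (simp_all add: abs_mult)
    finally show "\<bar>normal_density \<mu> \<sigma> x * (a + b * x)\<bar>
        \<le> \<bar>a\<bar> * normal_density \<mu> \<sigma> x + \<bar>b\<bar> * (normal_density \<mu> \<sigma> x * \<bar>x\<bar>)"
      by (simp add: algebra_simps)
  qed (use int int_abs_id assms in auto)
  also have "\<dots> = \<bar>a\<bar> + \<bar>b\<bar> * (\<integral>x. normal_density \<mu> \<sigma> x * \<bar>x\<bar> \<partial>lborel)"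
    using int_abs_id assms by simp
  also have "\<dots> \<le> \<bar>a\<bar> + \<bar>b\<bar> * (\<bar>\<mu>\<bar> + \<sigma>)"
    using normal_density_abs_moment_le[OF assms] by (simp add: mult_left_mono)
  finally show "(\<integral>x. \<bar>normal_density \<mu> \<sigma> x * (a + b * x)\<bar> \<partial>lborel) \<le> \<bar>a\<bar> + \<bar>b\<bar> * (\<bar>\<mu>\<bar> + \<sigma>)" .
qed

lemma normal_mixture_affine:
  fixes K :: "real \<Rightarrow> 'b \<Rightarrow> real" and \<mu> :: real
  assumes "sigma_finite_measure M" and "0 < \<sigma>" and "0 \<le> B"
    and K_measurable: "(\<lambda>(x, y). K x y) \<in> borel_measurable (lborel \<Otimes>\<^sub>M M)"
    and K_integrable: "\<And>x. integrable M (K x)"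
    and K_integral: "\<And>x. (\<integral>y. K x y \<partial>M) = C + D * x"
    and K_abs_integral: "\<And>x. (\<integral>y. \<bar>K x y\<bar> \<partial>M) \<le> A + B * \<bar>x\<bar>"
  defines "f \<equiv> \<lambda>(x, y). normal_density \<mu> \<sigma> x * K x y"
  shows "integrable (lborel \<Otimes>\<^sub>M M) f"
    and "integral\<^sup>L (lborel \<Otimes>\<^sub>M M) f = C + D * \<mu>"
    and "(\<integral>z. \<bar>f z\<bar> \<partial>(lborel \<Otimes>\<^sub>M M)) \<le> A + B * (\<bar>\<mu>\<bar> + \<sigma>)"
proof -
  interpret sigma_finite_measure M by (rule assms(1))
  interpret pair_sigma_finite lborel M by unfold_locales
  let ?N = "normal_density \<mu> \<sigma>"
  have f_measurable: "f \<in> borel_measurable (lborel \<Otimes>\<^sub>M M)"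
    unfolding f_def using K_measurable by measurable
  have "(\<lambda>(x, y). \<bar>K x y\<bar>) \<in> borel_measurable (lborel \<Otimes>\<^sub>M M)"
    using K_measurable by measurable
  then have "(\<lambda>x. \<integral>y. \<bar>K x y\<bar> \<partial>M) \<in> borel_measurable lborel"
    by (rule sigma_finite_measure.borel_measurable_lebesgue_integral[OF assms(1)])
  then have slice_measurable: "(\<lambda>x. \<integral>y. \<bar>f (x, y)\<bar> \<partial>M) \<in> borel_measurable lborel"
    by (simp add: f_def abs_mult)
  have abs_moment: "integrable lborel (\<lambda>x. ?N x * \<bar>x\<bar>)"
    by (rule integrable_normal_density_abs_moment[OF assms(2)])
  then have dominant: "integrable lborel (\<lambda>x. A * ?N x + B * (?N x * \<bar>x\<bar>))"
    using assms(2) by auto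
  have slice_le: "(\<integral>y. \<bar>f (x, y)\<bar> \<partial>M) \<le> A * ?N x + B * (?N x * \<bar>x\<bar>)" for x
    using mult_left_mono[OF K_abs_integral, of "?N x" x]
    by (simp add: f_def abs_mult algebra_simps)
  have slice_integrable: "integrable lborel (\<lambda>x. \<integral>y. \<bar>f (x, y)\<bar> \<partial>M)"
    by (rule Bochner_Integration.integrable_bound[OF dominant slice_measurable])
      (use slice_le in \<open>auto intro!: AE_I2 order.trans[OF _ abs_ge_self]\<close>)
  show f_integrable: "integrable (lborel \<Otimes>\<^sub>M M) f"
    by (rule Fubini_integrable[OF f_measurable])
      (use slice_integrable K_integrable in \<open>auto simp: f_def\<close>)
  have "integral\<^sup>L (lborel \<Otimes>\<^sub>M M) f = (\<integral>x. (\<integral>y. f (x, y) \<partial>M) \<partial>lborel)"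
    by (rule integral_fst'[OF f_integrable, symmetric])
  also have "\<dots> = (\<integral>x. ?N x * (C + D * x) \<partial>lborel)"
    by (simp add: f_def K_integral)
  also have "\<dots> = C + D * \<mu>"
    by (rule normal_density_affine_moment(2)[OF assms(2)])
  finally show "integral\<^sup>L (lborel \<Otimes>\<^sub>M M) f = C + D * \<mu>" .
  have "(\<integral>z. \<bar>f z\<bar> \<partial>(lborel \<Otimes>\<^sub>M M)) = (\<integral>x. (\<integral>y. \<bar>f (x, y)\<bar> \<partial>M) \<partial>lborel)"
    by (rule integral_fst'[OF integrable_abs[OF f_integrable], symmetric])
  also have "\<dots> \<le> (\<integral>x. A * ?N x + B * (?N x * \<bar>x\<bar>) \<partial>lborel)"
    by (rule integral_mono[OF slice_integrable dominant slice_le])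
  also have "\<dots> = A + B * (\<integral>x. ?N x * \<bar>x\<bar> \<partial>lborel)"
    using abs_moment assms(2) by simp
  also have "\<dots> \<le> A + B * (\<bar>\<mu>\<bar> + \<sigma>)"
    using normal_density_abs_moment_le[OF assms(2)] assms(3) by (simp add: mult_left_mono)
  finally show "(\<integral>z. \<bar>f z\<bar> \<partial>(lborel \<Otimes>\<^sub>M M)) \<le> A + B * (\<bar>\<mu>\<bar> + \<sigma>)" .
qed

lemma normal_density_precision:
  assumes "0 < p"
  shows "normal_density \<mu> (1 / sqrt p) x = sqrt (p / (2 * pi)) * exp (- (p * (x - \<mu>)\<^sup>2) / 2)"
  using assms by (simp add: normal_density_def power_divide real_sqrt_divide field_simps)

definition normal_chain_density :: "real \<Rightarrow> real \<Rightarrow> real \<Rightarrow> real \<Rightarrow> real \<Rightarrow> real \<times> real \<Rightarrow> real" where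
  "normal_chain_density \<mu> \<sigma> \<alpha> \<beta> \<tau> = (\<lambda>(x, y). normal_density \<mu> \<sigma> x * normal_density (\<alpha> + \<beta> * x) \<tau> y)"

lemma normal_chain_density_affine_moment:
  fixes \<mu> \<sigma> \<alpha> \<beta> \<tau> c\<^sub>0 c\<^sub>1 c\<^sub>2 :: real
  assumes "0 < \<sigma>" and "0 < \<tau>"
  defines "f \<equiv> \<lambda>z. normal_chain_density \<mu> \<sigma> \<alpha> \<beta> \<tau> z * (c\<^sub>0 + c\<^sub>1 * fst z + c\<^sub>2 * snd z)"
  shows "integrable (lborel \<Otimes>\<^sub>M lborel) f"
    and "integral\<^sup>L (lborel \<Otimes>\<^sub>M lborel) f = c\<^sub>0 + c\<^sub>1 * \<mu> + c\<^sub>2 * (\<alpha> + \<beta> * \<mu>)"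
    and "(\<integral>z. \<bar>f z\<bar> \<partial>(lborel \<Otimes>\<^sub>M lborel))
      \<le> (\<bar>c\<^sub>0\<bar> + \<bar>c\<^sub>2\<bar> * (\<bar>\<alpha>\<bar> + \<tau>)) + (\<bar>c\<^sub>1\<bar> + \<bar>c\<^sub>2\<bar> * \<bar>\<beta>\<bar>) * (\<bar>\<mu>\<bar> + \<sigma>)"
proof -
  define K where "K x y = normal_density (\<alpha> + \<beta> * x) \<tau> y * ((c\<^sub>0 + c\<^sub>1 * x) + c\<^sub>2 * y)" for x y
  have f_eq: "f = (\<lambda>(x, y). normal_density \<mu> \<sigma> x * K x y)"
    by (simp add: f_def K_def normal_chain_density_def fun_eq_iff algebra_simps)
  have K_measurable: "(\<lambda>(x, y). K x y) \<in> borel_measurable (lborel \<Otimes>\<^sub>M lborel)"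
    unfolding K_def normal_density_def by measurable
  have K_integrable: "integrable lborel (K x)" for x
    unfolding K_def by (rule normal_density_affine_moment(1)[OF assms(2)])
  have K_integral: "(\<integral>y. K x y \<partial>lborel) = (c\<^sub>0 + c\<^sub>2 * \<alpha>) + (c\<^sub>1 + c\<^sub>2 * \<beta>) * x" for x
    unfolding K_def normal_density_affine_moment(2)[OF assms(2)] by (simp add: algebra_simps)
  have K_abs_integral:
    "(\<integral>y. \<bar>K x y\<bar> \<partial>lborel) \<le> (\<bar>c\<^sub>0\<bar> + \<bar>c\<^sub>2\<bar> * (\<bar>\<alpha>\<bar> + \<tau>)) + (\<bar>c\<^sub>1\<bar> + \<bar>c\<^sub>2\<bar> * \<bar>\<beta>\<bar>) * \<bar>x\<bar>" for x
  proof -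
    have "(\<integral>y. \<bar>K x y\<bar> \<partial>lborel) \<le> \<bar>c\<^sub>0 + c\<^sub>1 * x\<bar> + \<bar>c\<^sub>2\<bar> * (\<bar>\<alpha> + \<beta> * x\<bar> + \<tau>)"
      unfolding K_def by (rule normal_density_affine_moment(3)[OF assms(2)])
    also have "\<dots> \<le> (\<bar>c\<^sub>0\<bar> + \<bar>c\<^sub>1\<bar> * \<bar>x\<bar>) + \<bar>c\<^sub>2\<bar> * ((\<bar>\<alpha>\<bar> + \<bar>\<beta>\<bar> * \<bar>x\<bar>) + \<tau>)"
      by (intro add_mono mult_left_mono order.refl) (auto simp: abs_mult intro: order.trans[OF abs_triangle_ineq])
    finally show ?thesis by (simp add: algebra_simps)
  qed
  have "0 \<le> \<bar>c\<^sub>1\<bar> + \<bar>c\<^sub>2\<bar> * \<bar>\<beta>\<bar>" by simp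
  note mixture = normal_mixture_affine[OF lborel.sigma_finite_measure_axioms assms(1) this
      K_measurable K_integrable K_integral K_abs_integral, of \<mu>, folded f_eq]
  then show "integrable (lborel \<Otimes>\<^sub>M lborel) f"
    and "integral\<^sup>L (lborel \<Otimes>\<^sub>M lborel) f = c\<^sub>0 + c\<^sub>1 * \<mu> + c\<^sub>2 * (\<alpha> + \<beta> * \<mu>)"
    and "(\<integral>z. \<bar>f z\<bar> \<partial>(lborel \<Otimes>\<^sub>M lborel))
      \<le> (\<bar>c\<^sub>0\<bar> + \<bar>c\<^sub>2\<bar> * (\<bar>\<alpha>\<bar> + \<tau>)) + (\<bar>c\<^sub>1\<bar> + \<bar>c\<^sub>2\<bar> * \<bar>\<beta>\<bar>) * (\<bar>\<mu>\<bar> + \<sigma>)"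
    by (simp_all add: algebra_simps)
qed

lemma normal_chain3_affine_moment:
  fixes \<mu> \<sigma>\<^sub>1 \<sigma>\<^sub>2 \<sigma>\<^sub>3 k l\<^sub>1 l\<^sub>2 c\<^sub>0 c\<^sub>1 c\<^sub>2 :: real
  assumes "0 < \<sigma>\<^sub>1" and "0 < \<sigma>\<^sub>2" and "0 < \<sigma>\<^sub>3"
  defines "f \<equiv> \<lambda>(a, w). normal_density \<mu> \<sigma>\<^sub>1 a
    * (normal_chain_density (k * a) \<sigma>\<^sub>2 (l\<^sub>1 * a) l\<^sub>2 \<sigma>\<^sub>3 w * (c\<^sub>0 + c\<^sub>1 * fst w + c\<^sub>2 * snd w))"
  shows "integrable (lborel \<Otimes>\<^sub>M (lborel \<Otimes>\<^sub>M lborel)) f"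
    and "integral\<^sup>L (lborel \<Otimes>\<^sub>M (lborel \<Otimes>\<^sub>M lborel)) f = c\<^sub>0 + (c\<^sub>1 * k + c\<^sub>2 * (l\<^sub>1 + l\<^sub>2 * k)) * \<mu>"
proof -
  define K where "K a w = normal_chain_density (k * a) \<sigma>\<^sub>2 (l\<^sub>1 * a) l\<^sub>2 \<sigma>\<^sub>3 w * (c\<^sub>0 + c\<^sub>1 * fst w + c\<^sub>2 * snd w)"
    for a w
  have chain: "integrable (lborel \<Otimes>\<^sub>M lborel) (K a)"
    "(\<integral>w. K a w \<partial>(lborel \<Otimes>\<^sub>M lborel)) = c\<^sub>0 + c\<^sub>1 * (k * a) + c\<^sub>2 * (l\<^sub>1 * a + l\<^sub>2 * (k * a))"
    "(\<integral>w. \<bar>K a w\<bar> \<partial>(lborel \<Otimes>\<^sub>M lborel))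
      \<le> (\<bar>c\<^sub>0\<bar> + \<bar>c\<^sub>2\<bar> * (\<bar>l\<^sub>1 * a\<bar> + \<sigma>\<^sub>3)) + (\<bar>c\<^sub>1\<bar> + \<bar>c\<^sub>2\<bar> * \<bar>l\<^sub>2\<bar>) * (\<bar>k * a\<bar> + \<sigma>\<^sub>2)" for a
    unfolding K_def by (rule normal_chain_density_affine_moment[OF assms(2,3)])+
  have sigma_finite: "sigma_finite_measure (lborel \<Otimes>\<^sub>M (lborel :: real measure))"
    by (intro sigma_finite_pair_measure lborel.sigma_finite_measure_axioms)
  have K_measurable: "(\<lambda>(a, w). K a w) \<in> borel_measurable (lborel \<Otimes>\<^sub>M (lborel \<Otimes>\<^sub>M lborel))"
    unfolding K_def normal_chain_density_def normal_density_def by measurable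
  have K_integral: "(\<integral>w. K a w \<partial>(lborel \<Otimes>\<^sub>M lborel)) = c\<^sub>0 + (c\<^sub>1 * k + c\<^sub>2 * (l\<^sub>1 + l\<^sub>2 * k)) * a" for a
    using chain(2)[of a] by (simp add: algebra_simps)
  have K_abs_integral: "(\<integral>w. \<bar>K a w\<bar> \<partial>(lborel \<Otimes>\<^sub>M lborel))
      \<le> (\<bar>c\<^sub>0\<bar> + \<bar>c\<^sub>2\<bar> * \<sigma>\<^sub>3 + (\<bar>c\<^sub>1\<bar> + \<bar>c\<^sub>2\<bar> * \<bar>l\<^sub>2\<bar>) * \<sigma>\<^sub>2)
        + (\<bar>c\<^sub>2\<bar> * \<bar>l\<^sub>1\<bar> + (\<bar>c\<^sub>1\<bar> + \<bar>c\<^sub>2\<bar> * \<bar>l\<^sub>2\<bar>) * \<bar>k\<bar>) * \<bar>a\<bar>" for a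
    using chain(3)[of a] by (simp add: abs_mult algebra_simps)
  have "0 \<le> \<bar>c\<^sub>2\<bar> * \<bar>l\<^sub>1\<bar> + (\<bar>c\<^sub>1\<bar> + \<bar>c\<^sub>2\<bar> * \<bar>l\<^sub>2\<bar>) * \<bar>k\<bar>" by simp
  note mixture = normal_mixture_affine[OF sigma_finite assms(1) this
      K_measurable chain(1) K_integral K_abs_integral, of \<mu>]
  show "integrable (lborel \<Otimes>\<^sub>M (lborel \<Otimes>\<^sub>M lborel)) f"
    and "integral\<^sup>L (lborel \<Otimes>\<^sub>M (lborel \<Otimes>\<^sub>M lborel)) f = c\<^sub>0 + (c\<^sub>1 * k + c\<^sub>2 * (l\<^sub>1 + l\<^sub>2 * k)) * \<mu>"
    using mixture(1,2) unfolding f_def K_def by simp_all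
qed

section \<open>The Gaussian noise\<close>

lemma gauss_dens_factorization:
  assumes "pos_definite S"
  obtains \<sigma>\<^sub>1 \<sigma>\<^sub>2 \<sigma>\<^sub>3 k l\<^sub>1 l\<^sub>2 where "0 < \<sigma>\<^sub>1" and "0 < \<sigma>\<^sub>2" and "0 < \<sigma>\<^sub>3"
    and "gauss_dens S = (\<lambda>(a, w). normal_density 0 \<sigma>\<^sub>1 a * normal_chain_density (k * a) \<sigma>\<^sub>2 (l\<^sub>1 * a) l\<^sub>2 \<sigma>\<^sub>3 w)"
    and "l\<^sub>1 + l\<^sub>2 * k = S$3$1 / S$1$1"
proof -
  define P where "P = matrix_inv S"
  have P: "pos_definite P" and PS: "P ** S = mat 1" and SP: "S ** P = mat 1"
    using pos_definite_matrix_inv[OF assms] by (simp_all add: P_def)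
  define D where "D = P$2$2 * P$3$3 - (P$2$3)\<^sup>2"
  define k where "k = (P$1$3 * P$2$3 - P$1$2 * P$3$3) / D"
  define l\<^sub>1 where "l\<^sub>1 = - P$1$3 / P$3$3"
  define l\<^sub>2 where "l\<^sub>2 = - P$2$3 / P$3$3"
  have p33: "0 < P$3$3" and D: "0 < D" and det: "0 < det P"
    using pos_definite_minors[OF P] by (simp_all add: D_def)
  have "det S * det P = 1"
    by (metis SP det_I det_mul)
  then have det_S: "det S = 1 / det P" using det by (simp add: field_simps)
  have quadratic_form: "(vector [a, b, c] :: real^3) \<bullet> (P *v vector [a, b, c])
      = det P / D * a\<^sup>2 + D / P$3$3 * (b - k * a)\<^sup>2 + P$3$3 * (c - (l\<^sub>1 * a + l\<^sub>2 * b))\<^sup>2" for a b c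
    unfolding pos_definite_quadratic_form[OF P] k_def l\<^sub>1_def l\<^sub>2_def
    by (rule complete_square_3) (use p33 D in \<open>simp_all add: D_def pos_definite_det[OF P]\<close>)
  have "gauss_dens S (a, b, c) = normal_density 0 (1 / sqrt (det P / D)) a
      * normal_chain_density (k * a) (1 / sqrt (D / P$3$3)) (l\<^sub>1 * a) l\<^sub>2 (1 / sqrt (P$3$3)) (b, c)" for a b c
  proof -
    have precisions: "0 < det P / D" "0 < D / P$3$3" "0 < P$3$3"
      using p33 D det by simp_all
    have normalization: "1 / sqrt ((2 * pi) ^ 3 * det S)
        = sqrt (det P / D / (2 * pi)) * sqrt (D / P$3$3 / (2 * pi)) * sqrt (P$3$3 / (2 * pi))"
      using p33 D det unfolding det_S real_sqrt_mult[symmetric]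
      by (simp add: real_sqrt_divide field_simps power3_eq_cube)
    have "gauss_dens S (a, b, c)
        = exp (- ((vector [a, b, c] :: real^3) \<bullet> (P *v vector [a, b, c])) / 2) / sqrt ((2 * pi) ^ 3 * det S)"
      by (simp add: gauss_dens_def P_def Let_def)
    also have "\<dots> = sqrt (det P / D / (2 * pi)) * exp (- (det P / D * (a - 0)\<^sup>2) / 2)
        * (sqrt (D / P$3$3 / (2 * pi)) * exp (- (D / P$3$3 * (b - k * a)\<^sup>2) / 2)
        * (sqrt (P$3$3 / (2 * pi)) * exp (- (P$3$3 * (c - (l\<^sub>1 * a + l\<^sub>2 * b))\<^sup>2) / 2)))"
      unfolding quadratic_form divide_inverse[of "exp _"] inverse_eq_divide normalization
      by (simp add: exp_add[symmetric] diff_divide_distrib add_divide_distrib mult_ac)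
    finally show ?thesis
      by (simp add: normal_chain_density_def normal_density_precision[OF precisions(1)]
          normal_density_precision[OF precisions(2)] normal_density_precision[OF precisions(3)])
  qed
  moreover have "l\<^sub>1 + l\<^sub>2 * k = S$3$1 / S$1$1"
  proof -
    have "(P ** S)$2$1 = 0" and "(P ** S)$3$1 = 0"
      using PS by (simp_all add: mat_def)
    then have "P$1$2 * S$1$1 + P$2$2 * S$2$1 + P$2$3 * S$3$1 = 0"
        and "P$1$3 * S$1$1 + P$2$3 * S$2$1 + P$3$3 * S$3$1 = 0"
      by (simp_all add: matrix_matrix_mult_def sum_3 pos_definite_symmetric_entries[OF P])
    then have "S$3$1 * D = S$1$1 * (P$1$2 * P$2$3 - P$1$3 * P$2$2)"
      unfolding D_def by algebra
    then show ?thesis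
      using p33 D pos_definite_minors(1)[OF assms]
      by (simp add: k_def l\<^sub>1_def l\<^sub>2_def D_def field_simps power2_eq_square) algebra
  qed
  ultimately show ?thesis
    using that[of "1 / sqrt (det P / D)" "1 / sqrt (D / P$3$3)" "1 / sqrt (P$3$3)" k l\<^sub>1 l\<^sub>2] p33 D det
    by (auto simp: fun_eq_iff)
qed


lemma gauss_dens_nonneg:
  assumes "pos_definite S"
  shows "0 \<le> gauss_dens S u"
proof -
  obtain \<sigma>\<^sub>1 \<sigma>\<^sub>2 \<sigma>\<^sub>3 k l\<^sub>1 l\<^sub>2 where "0 < \<sigma>\<^sub>1" "0 < \<sigma>\<^sub>2" "0 < \<sigma>\<^sub>3"
    and factorization: "gauss_dens S
      = (\<lambda>(a, w). normal_density 0 \<sigma>\<^sub>1 a * normal_chain_density (k * a) \<sigma>\<^sub>2 (l\<^sub>1 * a) l\<^sub>2 \<sigma>\<^sub>3 w)"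
    and "l\<^sub>1 + l\<^sub>2 * k = S$3$1 / S$1$1"
    by (rule gauss_dens_factorization[OF assms])
  show ?thesis
    by (cases u) (simp add: factorization normal_chain_density_def)
qed

lemma gauss_dens_affine_moment:
  fixes c\<^sub>0 c\<^sub>1 c\<^sub>2 :: real
  assumes "pos_definite S"
  defines "f \<equiv> \<lambda>u. gauss_dens S u * (c\<^sub>0 + c\<^sub>1 * fst (snd u) + c\<^sub>2 * snd (snd u))"
  shows "integrable lborel f" and "integral\<^sup>L lborel f = c\<^sub>0"
proof -
  obtain \<sigma>\<^sub>1 \<sigma>\<^sub>2 \<sigma>\<^sub>3 k l\<^sub>1 l\<^sub>2 where \<sigma>: "0 < \<sigma>\<^sub>1" "0 < \<sigma>\<^sub>2" "0 < \<sigma>\<^sub>3"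
    and factorization: "gauss_dens S
      = (\<lambda>(a, w). normal_density 0 \<sigma>\<^sub>1 a * normal_chain_density (k * a) \<sigma>\<^sub>2 (l\<^sub>1 * a) l\<^sub>2 \<sigma>\<^sub>3 w)"
    and "l\<^sub>1 + l\<^sub>2 * k = S$3$1 / S$1$1"
    by (rule gauss_dens_factorization[OF assms(1)])
  have "f = (\<lambda>(a, w). normal_density 0 \<sigma>\<^sub>1 a
      * (normal_chain_density (k * a) \<sigma>\<^sub>2 (l\<^sub>1 * a) l\<^sub>2 \<sigma>\<^sub>3 w * (c\<^sub>0 + c\<^sub>1 * fst w + c\<^sub>2 * snd w)))"
    by (auto simp: f_def factorization fun_eq_iff split: prod.split)
  moreover have "(lborel :: (real \<times> real \<times> real) measure) = lborel \<Otimes>\<^sub>M (lborel \<Otimes>\<^sub>M lborel)"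
    by (simp add: lborel_prod)
  ultimately show "integrable lborel f" and "integral\<^sup>L lborel f = c\<^sub>0"
    using normal_chain3_affine_moment[OF \<sigma>, of 0 k l\<^sub>1 l\<^sub>2 c\<^sub>0 c\<^sub>1 c\<^sub>2] by simp_all
qed

lemma prob_space_noise:
  assumes "pos_definite S"
  shows "prob_space (noise S)"
proof
  note moment = gauss_dens_affine_moment[OF assms, where c\<^sub>0 = 1 and c\<^sub>1 = 0 and c\<^sub>2 = 0, simplified]
  have "emeasure (noise S) (space (noise S)) = (\<integral>\<^sup>+u. ennreal (gauss_dens S u) \<partial>lborel)"
    unfolding noise_def using borel_measurable_integrable[OF moment(1)] by (simp add: emeasure_density)
  also have "\<dots> = ennreal (\<integral>u. gauss_dens S u \<partial>lborel)"
    using moment(1) gauss_dens_nonneg[OF assms] by (intro nn_integral_eq_integral) auto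
  finally show "emeasure (noise S) (space (noise S)) = 1"
    using moment(2) by simp
qed

lemma noise_affine_moment:
  assumes "pos_definite S"
  shows "integrable (noise S) (\<lambda>u. c\<^sub>0 + c\<^sub>1 * fst (snd u) + c\<^sub>2 * snd (snd u))"
    and "(\<integral>u. c\<^sub>0 + c\<^sub>1 * fst (snd u) + c\<^sub>2 * snd (snd u) \<partial>noise S) = c\<^sub>0"
proof -
  note moment = gauss_dens_affine_moment[OF assms, of c\<^sub>0 c\<^sub>1 c\<^sub>2]
  have "gauss_dens S \<in> borel_measurable lborel"
    using gauss_dens_affine_moment(1)[OF assms, where c\<^sub>0 = 1 and c\<^sub>1 = 0 and c\<^sub>2 = 0]
    by (auto dest: borel_measurable_integrable)
  moreover have "(\<lambda>u::real \<times> real \<times> real. c\<^sub>0 + c\<^sub>1 * fst (snd u) + c\<^sub>2 * snd (snd u)) \<in> borel_measurable lborel"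
    by (simp add: lborel_prod[symmetric])
  ultimately show "integrable (noise S) (\<lambda>u. c\<^sub>0 + c\<^sub>1 * fst (snd u) + c\<^sub>2 * snd (snd u))"
    and "(\<integral>u. c\<^sub>0 + c\<^sub>1 * fst (snd u) + c\<^sub>2 * snd (snd u) \<partial>noise S) = c\<^sub>0"
    using moment gauss_dens_nonneg[OF assms] unfolding noise_def
    by (simp_all add: integrable_density integral_density)
qed

lemma cond_exp_U1_affine:
  assumes "pos_definite S"
  shows "cond_exp_U1 S (\<lambda>u. c\<^sub>0 + c * snd (snd u)) x\<^sub>1 = c\<^sub>0 + c * (S$3$1 / S$1$1 * x\<^sub>1)"
proof -
  obtain \<sigma>\<^sub>1 \<sigma>\<^sub>2 \<sigma>\<^sub>3 k l\<^sub>1 l\<^sub>2 where \<sigma>: "0 < \<sigma>\<^sub>1" "0 < \<sigma>\<^sub>2" "0 < \<sigma>\<^sub>3"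
    and factorization: "gauss_dens S
      = (\<lambda>(a, w). normal_density 0 \<sigma>\<^sub>1 a * normal_chain_density (k * a) \<sigma>\<^sub>2 (l\<^sub>1 * a) l\<^sub>2 \<sigma>\<^sub>3 w)"
    and regression: "l\<^sub>1 + l\<^sub>2 * k = S$3$1 / S$1$1"
    by (rule gauss_dens_factorization[OF assms])
  have slice: "(\<integral>w. (d\<^sub>0 + d * snd w) * gauss_dens S (x\<^sub>1, w) \<partial>lborel)
      = normal_density 0 \<sigma>\<^sub>1 x\<^sub>1 * (d\<^sub>0 + d * (S$3$1 / S$1$1 * x\<^sub>1))" for d\<^sub>0 d
  proof -
    have "(\<integral>w. (d\<^sub>0 + d * snd w) * gauss_dens S (x\<^sub>1, w) \<partial>lborel) = normal_density 0 \<sigma>\<^sub>1 x\<^sub>1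
        * (\<integral>w. normal_chain_density (k * x\<^sub>1) \<sigma>\<^sub>2 (l\<^sub>1 * x\<^sub>1) l\<^sub>2 \<sigma>\<^sub>3 w * (d\<^sub>0 + 0 * fst w + d * snd w) \<partial>lborel)"
      by (simp add: factorization mult_ac)
    also have "\<dots> = normal_density 0 \<sigma>\<^sub>1 x\<^sub>1 * (d\<^sub>0 + 0 * (k * x\<^sub>1) + d * (l\<^sub>1 * x\<^sub>1 + l\<^sub>2 * (k * x\<^sub>1)))"
      using normal_chain_density_affine_moment(2)[OF \<sigma>(2,3)] by (simp only: lborel_prod)
    finally show ?thesis
      by (simp add: regression[symmetric] algebra_simps)
  qed
  show ?thesis
    using slice[of c\<^sub>0 c] slice[of 1 0] normal_density_pos[OF \<sigma>(1), of 0 x\<^sub>1]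
    by (simp add: cond_exp_U1_def)
qed

lemma g_cond_eq:
  assumes "pos_definite S"
  shows "g_cond S fY x\<^sub>1 x\<^sub>2 = fY (x\<^sub>1, x\<^sub>2) + S$3$1 / S$1$1 * x\<^sub>1"
proof -
  have "g_cond S fY x\<^sub>1 x\<^sub>2 = cond_exp_U1 S (\<lambda>u. fY (x\<^sub>1, x\<^sub>2) + 1 * snd (snd u)) x\<^sub>1"
    by (simp add: g_cond_def cond_exp_U1_def Y_do2_def X1_do2_def split_beta)
  also have "\<dots> = fY (x\<^sub>1, x\<^sub>2) + 1 * (S$3$1 / S$1$1 * x\<^sub>1)"
    by (rule cond_exp_U1_affine[OF assms])
  finally show ?thesis by simp
qed

theorem mainTheorem3:
  fixes S :: "real^3^3" and f2 :: "real \<Rightarrow> real" and fY :: "real \<times> real \<Rightarrow> real"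
    and x1 :: real
  assumes "pos_definite S"
    and "continuous_on UNIV f2"
    and "continuous_on UNIV fY"
    and "integrable (noise S) (\<lambda>u. fY (x1, f2 x1 + fst (snd u)))"
  shows "(\<integral>u. g_cond S fY x1 (f2 x1 + fst (snd u)) \<partial>noise S) - (\<integral>u. Y_do1 f2 fY x1 u \<partial>noise S)
           = cond_exp_U1 S (\<lambda>u. snd (snd u)) x1
       \<and> cond_exp_U1 S (\<lambda>u. snd (snd u)) x1 = S $ 3 $ 1 / S $ 1 $ 1 * x1
       \<and> f2 x1 = (\<integral>u. X2_do1 f2 x1 u \<partial>noise S)"
proof -
  interpret prob_space "noise S" by (rule prob_space_noise[OF assms(1)])
  let ?F = "\<lambda>u. fY (x1, f2 x1 + fst (snd u))" and ?r = "S $ 3 $ 1 / S $ 1 $ 1 * x1"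
  note mean_UY = noise_affine_moment[OF assms(1), where c\<^sub>0 = 0 and c\<^sub>1 = 0 and c\<^sub>2 = 1, simplified]
  note mean_X2 = noise_affine_moment[OF assms(1), where c\<^sub>0 = "f2 x1" and c\<^sub>1 = 1 and c\<^sub>2 = 0, simplified]
  have cond_exp: "cond_exp_U1 S (\<lambda>u. snd (snd u)) x1 = ?r"
    using cond_exp_U1_affine[OF assms(1), where c\<^sub>0 = 0 and c = 1] by simp
  have "(\<integral>u. g_cond S fY x1 (f2 x1 + fst (snd u)) \<partial>noise S) = (\<integral>u. ?F u \<partial>noise S) + ?r"
    using assms(4) by (simp add: g_cond_eq[OF assms(1)] prob_space)
  moreover have "(\<integral>u. Y_do1 f2 fY x1 u \<partial>noise S) = (\<integral>u. ?F u \<partial>noise S)"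
    using assms(4) mean_UY by (simp add: Y_do1_def X2_do1_def split_beta)
  moreover have "(\<integral>u. X2_do1 f2 x1 u \<partial>noise S) = f2 x1"
    using mean_X2 by (simp add: X2_do1_def split_beta)
  ultimately show ?thesis using cond_exp by simp
qed

end
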